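(* Let $B^\star\in\mathbb R^{p\times q}$ have all its nonzero entries in $S_u\times S_v$, where $S_u\subseteq[p]$, $S_v\subseteq[q]$, $|S_u|=s_u$, $|S_v|=s_v$, and assume $n>\max\{s_u,s_v\}$. Assume $\sigma_{\min}((\widehat\Sigma_X)_{S_uS_u})>0$, $\sigma_{\min}((\widehat\Sigma_Y)_{S_vS_v})>0$, and, writing $G=\widehat\Sigma_{XY}-\widehat\Sigma_XB^\star\widehat\Sigma_Y$, $$\frac{\|G\|_\infty}{\rho}+\frac{2(\|G\|_\infty+\rho)}{\rho}\cdot\frac{\widehat\tau(X,Y)\sqrt{s_us_v}}{\sigma_{\min}((\widehat\Sigma_X)_{S_uS_u})\,\sigma_{\min}((\widehat\Sigma_Y)_{S_vS_v})}\le 1,$$ where $$\widehat\tau(X,Y)=\max\Big\{\|(\widehat\Sigma_X)_{S_u^cS_u}\|_{2,\infty}\|(\widehat\Sigma_Y)_{S_v^cS_v}\|_{2,\infty},\ \|(\widehat\Sigma_X)_{S_u^cS_u}\|_{2,\infty}\|(\widehat\Sigma_Y)_{S_vS_v}\|_{op},\ \|(\widehat\Sigma_X)_{S_uS_u}\|_{op}\|(\widehat\Sigma_Y)_{S_v^cS_v}\|_{2,\infty}\Big\}.$$ Then the problem $\min_{B\in\mathbb R^{p\times q}}\tfrac12\|\tfrac1nXBY^\top-I_n\|_F^2+\rho\sum_{i,j}|B_{ij}|$ has a unique minimizer $\widehat B$, and every nonzero entry $\widehat B_{ij}$ satisfies $(i,j)\in S_u\times S_v$.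
   Context: $X\in\mathbb R^{n\times p}$, $Y\in\mathbb R^{n\times q}$ are data matrices, $\widehat\Sigma_X=X^\top X/n$, $\widehat\Sigma_Y=Y^\top Y/n$, $\widehat\Sigma_{XY}=X^\top Y/n$, $\rho>0$. In the paper's application $S_u,S_v$ are the sets of nonzero rows of $U^\star,V^\star$ and $B^\star=U^\star\Lambda^\star V^{\star\top}$. For index sets $S_1,S_2$, $A_{S_1S_2}$ is the submatrix with rows in $S_1$ and columns in $S_2$; $S^c$ is the complement. $\|A\|_\infty=\max_{i,j}|A_{ij}|$, $\|A\|_{2,\infty}$ is the maximum Euclidean norm of a row of $A$, $\|A\|_{op}$ the largest singular value, $\sigma_{\min}$ the smallest singular value. *)

theory Defs
  imports "HOL-Analysis.Analysis"
begin

text \<open>Matrices are Cartesian-product types: a p x q real matrix is real^'q^'p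
  (row i is A $ i, entry (i,j) is A $ i $ j).\<close>

definition max_abs :: "real^'c^'r \<Rightarrow> real" where
  "max_abs A = Max {\<bar>A $ i $ j\<bar> | i j. True}"

definition l1_entries :: "real^'c^'r \<Rightarrow> real" where
  "l1_entries A = (\<Sum>i\<in>UNIV. \<Sum>j\<in>UNIV. \<bar>A $ i $ j\<bar>)"

definition frob_sq :: "real^'c^'r \<Rightarrow> real" where
  "frob_sq A = (\<Sum>i\<in>UNIV. \<Sum>j\<in>UNIV. (A $ i $ j)^2)"

definition norm_2inf_sub :: "real^'c^'r \<Rightarrow> 'r set \<Rightarrow> 'c set \<Rightarrow> real" where
  "norm_2inf_sub A S1 S2 =
     Max (insert 0 {sqrt (\<Sum>j\<in>S2. (A $ i $ j)^2) | i. i \<in> S1})"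

definition opnorm_sub :: "real^'c^'r \<Rightarrow> 'r set \<Rightarrow> 'c set \<Rightarrow> real" where
  "opnorm_sub A S1 S2 =
     Sup {sqrt (\<Sum>i\<in>S1. (\<Sum>j\<in>S2. A $ i $ j * x $ j)^2) | x. (\<Sum>j\<in>S2. (x $ j)^2) = 1}"

definition sigma_min_sub :: "real^'r^'r \<Rightarrow> 'r set \<Rightarrow> real" where
  "sigma_min_sub A S =
     Inf {sqrt (\<Sum>i\<in>S. (\<Sum>j\<in>S. A $ i $ j * x $ j)^2) | x. (\<Sum>j\<in>S. (x $ j)^2) = 1}"

definition cov :: "real^'a^'n \<Rightarrow> real^'b^'n \<Rightarrow> real^'b^'a" where
  "cov X Y = (1 / real CARD('n)) *\<^sub>R (transpose X ** Y)"

definition cca_obj :: "real^'p^'n \<Rightarrow> real^'q^'n \<Rightarrow> real \<Rightarrow> real^'q^'p \<Rightarrow> real" where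
  "cca_obj X Y \<rho> B =
     1/2 * frob_sq ((1 / real CARD('n)) *\<^sub>R (X ** B ** transpose Y) - mat 1)
     + \<rho> * l1_entries B"

definition tau_hat :: "real^'p^'n \<Rightarrow> real^'q^'n \<Rightarrow> 'p set \<Rightarrow> 'q set \<Rightarrow> real" where
  "tau_hat X Y Su Sv =
     Max {norm_2inf_sub (cov X X) (-Su) Su * norm_2inf_sub (cov Y Y) (-Sv) Sv,
          norm_2inf_sub (cov X X) (-Su) Su * opnorm_sub (cov Y Y) Sv Sv,
          opnorm_sub (cov X X) Su Su * norm_2inf_sub (cov Y Y) (-Sv) Sv}"

end

theory Submission
  imports Defs
begin

text \<open>
  Primal-dual witness. Minimise the objective over matrices supported on \<open>Su \<times> Sv\<close>; by
  coercivity a minimiser \<open>B0\<close> exists, and on the support the gradient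
  \<open>\<nabla> = \<Sigma>\<^sub>X B0 \<Sigma>\<^sub>Y - \<Sigma>\<^sub>X\<^sub>Y\<close> satisfies the subgradient conditions of the \<open>l\<^sub>1\<close>-penalty.
  With \<open>D = B0 - B\<^sup>\<star>\<close> one has \<open>\<Sigma>\<^sub>X D \<Sigma>\<^sub>Y = \<nabla> + G\<close>, whose entries on the support are at most
  \<open>\<rho> + \<parallel>G\<parallel>\<^sub>\<infinity>\<close>. The smallest singular values of the diagonal blocks turn this into Frobenius
  bounds on \<open>D\<close>, \<open>D \<Sigma>\<^sub>Y\<close> and \<open>\<Sigma>\<^sub>X D\<close>, and Cauchy-Schwarz against the off-diagonal blocks (the
  quantity \<open>tau_hat\<close>) bounds the off-support entries of \<open>\<Sigma>\<^sub>X D \<Sigma>\<^sub>Y\<close>, hence of \<open>\<nabla>\<close>. The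
  hypothesis makes these at most \<open>\<rho>\<close>, so \<open>-\<nabla>/\<rho>\<close> is a dual certificate and \<open>B0\<close> is a global
  minimiser. Any other minimiser has the same fit \<open>X B Y\<^sup>T\<close>, so \<open>\<Sigma>\<^sub>X (B - B0) \<Sigma>\<^sub>Y = 0\<close>,
  and it agrees in sign with the certificate; strict dual feasibility (or, when \<open>tau_hat = 0\<close>,
  block-diagonal covariances) then forces \<open>B = B0\<close>.
\<close>

lemma sum_sum_nonneg_eq_0_iff:
  fixes f :: "'a \<Rightarrow> 'b \<Rightarrow> real"
  assumes "finite I" "finite J" "\<And>i j. i \<in> I \<Longrightarrow> j \<in> J \<Longrightarrow> 0 \<le> f i j"
  shows "(\<Sum>i\<in>I. \<Sum>j\<in>J. f i j) = 0 \<longleftrightarrow> (\<forall>i\<in>I. \<forall>j\<in>J. f i j = 0)"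
  using assms by (simp add: sum_nonneg_eq_0_iff sum_nonneg)

lemma mult_sqrt_le_sqrt:
  fixes a x y :: real
  assumes "0 \<le> a" "a^2 * x \<le> y"
  shows "a * sqrt x \<le> sqrt y"
proof -
  have "a * sqrt x = sqrt (a^2 * x)"
    using assms(1) by (simp add: real_sqrt_mult)
  also have "\<dots> \<le> sqrt y"
    using assms(2) by (rule real_sqrt_le_mono)
  finally show ?thesis .
qed

lemma abs_sum_mult_le_L2_set: "\<bar>\<Sum>i\<in>I. f i * g i\<bar> \<le> L2_set f I * L2_set g I"
  using sum_abs[of "\<lambda>i. f i * g i" I] L2_set_mult_ineq[of f g I] by (simp add: abs_mult)

lemma mult_le_abs_if_abs_le_1:
  fixes z b :: real
  assumes "\<bar>z\<bar> \<le> 1"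
  shows "z * b \<le> \<bar>b\<bar>"
proof -
  have "z * b \<le> \<bar>z\<bar> * \<bar>b\<bar>"
    by (metis abs_ge_self abs_mult)
  also have "\<dots> \<le> \<bar>b\<bar>"
    using assms by (simp add: mult_left_le_one_le)
  finally show ?thesis .
qed

lemma eq_0_if_mult_eq_abs:
  fixes z b :: real
  assumes "\<bar>z\<bar> < 1" and "z * b = \<bar>b\<bar>"
  shows "b = 0"
proof (rule ccontr)
  assume "b \<noteq> 0"
  then have "\<bar>z\<bar> * \<bar>b\<bar> < \<bar>b\<bar>"
    using assms(1) by simp
  moreover have "\<bar>b\<bar> \<le> \<bar>z\<bar> * \<bar>b\<bar>"
    using assms(2) by (metis abs_ge_self abs_mult)
  ultimately show False by simp
qed

lemma nonneg_from_right_perturbation: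
  fixes a c \<delta> :: real
  assumes "0 < \<delta>" and "\<And>t. 0 < t \<Longrightarrow> t < \<delta> \<Longrightarrow> 0 \<le> t * (a + c * t)"
  shows "0 \<le> a"
proof (rule tendsto_lowerbound)
  show "((\<lambda>t. a + c * t) \<longlongrightarrow> a) (at_right 0)"
    by (auto intro!: tendsto_eq_intros)
  show "\<forall>\<^sub>F t in at_right 0. 0 \<le> a + c * t"
    using eventually_at_right_real[OF assms(1)]
    by eventually_elim (use assms(2) in \<open>auto simp: zero_le_mult_iff\<close>)
qed simp

lemma abs_penalty_stationary:
  fixes D c b \<rho> :: real
  assumes "0 \<le> \<rho>" and "\<And>t. 0 \<le> t * D + c * t^2 + \<rho> * (\<bar>b + t\<bar> - \<bar>b\<bar>)"
  shows "\<bar>D\<bar> \<le> \<rho>" and "- D * b = \<rho> * \<bar>b\<bar>"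
proof -
  define \<delta> where "\<delta> = (if b = 0 then 1 else \<bar>b\<bar>)"
  have "0 < \<delta>" by (simp add: \<delta>_def)
  txt \<open>\<open>s\<close> and \<open>-s'\<close> are the right and left derivatives of \<open>\<bar>b + t\<bar>\<close> at \<open>t = 0\<close>.\<close>
  define s where "s = (if b \<ge> 0 then 1 else -1 :: real)"
  define s' where "s' = (if b > 0 then 1 else -1 :: real)"
  have "0 \<le> D + \<rho> * s"
  proof (rule nonneg_from_right_perturbation[OF \<open>0 < \<delta>\<close>])
    fix t :: real assume "0 < t" "t < \<delta>"
    then have "\<bar>b + t\<bar> - \<bar>b\<bar> = t * s" by (auto simp: \<delta>_def s_def split: if_splits)
    then have "0 \<le> t * D + c * t^2 + \<rho> * (t * s)" using assms(2)[of t] by simp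
    then show "0 \<le> t * (D + \<rho> * s + c * t)" by (simp add: algebra_simps power2_eq_square)
  qed
  moreover have "0 \<le> - D - \<rho> * s'"
  proof (rule nonneg_from_right_perturbation[OF \<open>0 < \<delta>\<close>])
    fix t :: real assume "0 < t" "t < \<delta>"
    then have "\<bar>b + - t\<bar> - \<bar>b\<bar> = - t * s'" by (auto simp: \<delta>_def s'_def split: if_splits)
    then have "0 \<le> - t * D + c * t^2 + \<rho> * (- t * s')" using assms(2)[of "- t"] by simp
    then show "0 \<le> t * (- D - \<rho> * s' + c * t)" by (simp add: algebra_simps power2_eq_square)
  qed
  ultimately have "b > 0 \<Longrightarrow> D = - \<rho>" "b < 0 \<Longrightarrow> D = \<rho>" "b = 0 \<Longrightarrow> \<bar>D\<bar> \<le> \<rho>"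
    by (auto simp: s_def s'_def)
  with assms(1) show "\<bar>D\<bar> \<le> \<rho>" and "- D * b = \<rho> * \<bar>b\<bar>"
    by (cases b rule: linorder_cases[of _ 0]; force)+
qed

definition supported_on :: "real^'c^'r \<Rightarrow> 'r set \<Rightarrow> 'c set \<Rightarrow> bool" where
  "supported_on B S T \<longleftrightarrow> (\<forall>i j. B $ i $ j \<noteq> 0 \<longrightarrow> i \<in> S \<and> j \<in> T)"

lemma supported_on_iff: "supported_on B S T \<longleftrightarrow> (\<forall>i j. \<not> (i \<in> S \<and> j \<in> T) \<longrightarrow> B $ i $ j = 0)"
  unfolding supported_on_def by blast

lemma closed_supported_on: "closed {B :: real^'c::finite^'r::finite. supported_on B S T}"
proof -
  have "{B. supported_on B S T} = {B. \<forall>i j. (i \<in> S \<and> j \<in> T) \<or> B $ i $ j = 0}"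
    by (auto simp: supported_on_def)
  also have "closed \<dots>"
    by (intro closed_Collect_all closed_Collect_disj closed_Collect_eq continuous_intros) simp
  finally show ?thesis .
qed

lemma inner_matrix: "inner A B = (\<Sum>i\<in>UNIV. \<Sum>j\<in>UNIV. A $ i $ j * B $ i $ j)"
  for A B :: "real^'c::finite^'r::finite"
  by (simp add: inner_vec_def)

lemma frob_sq_eq_norm: "frob_sq A = (norm A)^2"
  unfolding power2_norm_eq_inner inner_matrix frob_sq_def by (simp add: power2_eq_square)

lemma inner_transpose: "inner (transpose A) (transpose B) = inner A B"
  for A :: "real^'c::finite^'r::finite"
  by (simp add: inner_matrix transpose_def) (rule sum.swap)

lemma inner_matrix_mult_left: "inner H (P ** Q) = inner (H ** transpose Q) P"
  for H :: "real^'c::finite^'r::finite"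
  by (simp add: inner_matrix matrix_matrix_mult_def transpose_def sum_distrib_left
      sum_distrib_right mult_ac) (rule sum.cong[OF refl], rule sum.swap)

lemma inner_matrix_mult_right: "inner H (P ** Q) = inner (transpose P ** H) Q"
  for H :: "real^'c::finite^'r::finite"
proof -
  have "inner H (P ** Q) = inner (transpose H) (transpose Q ** transpose P)"
    by (simp add: inner_transpose flip: matrix_transpose_mul)
  also have "\<dots> = inner (transpose (transpose P ** H)) (transpose Q)"
    by (simp add: inner_matrix_mult_left matrix_transpose_mul)
  finally show ?thesis by (simp add: inner_transpose)
qed

lemma inner_sandwich: "inner H (P ** D ** Q) = inner (transpose P ** H ** transpose Q) D"
  for H :: "real^'c::finite^'r::finite"
proof -
  have "inner H (P ** D ** Q) = inner (transpose P ** (H ** transpose Q)) D"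
    unfolding inner_matrix_mult_left[of H "P ** D"] by (rule inner_matrix_mult_right)
  then show ?thesis by (simp add: matrix_mul_assoc)
qed

lemma matrix_sandwich_entry:
  "(A ** D ** C) $ j $ k = (\<Sum>l\<in>UNIV. \<Sum>m\<in>UNIV. A $ j $ l * D $ l $ m * C $ m $ k)"
  for A :: "real^'p::finite^'r"
  by (simp add: matrix_matrix_mult_def sum_distrib_right sum_distrib_left mult.assoc)
    (rule sum.swap)

lemma matrix_sandwich_diff: "A ** (B - B') ** C = A ** B ** C - A ** B' ** C"
  for A :: "real^'p::finite^'r"
  by (simp add: vec_eq_iff matrix_sandwich_entry algebra_simps sum_subtractf)

lemma matrix_mult_entry_eq_sum_subset:
  assumes "\<forall>m. m \<notin> S \<longrightarrow> U $ j $ m * C $ m $ k = 0"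
  shows "(U ** C) $ j $ k = (\<Sum>m\<in>S. U $ j $ m * C $ m $ k)"
  unfolding matrix_matrix_mult_def using assms by (auto intro: sum.mono_neutral_right)

lemma abs_matrix_mult_entry_le:
  assumes "\<forall>m. m \<notin> S \<longrightarrow> U $ j $ m * C $ m $ k = 0"
  shows "\<bar>(U ** C) $ j $ k\<bar> \<le> L2_set (\<lambda>m. U $ j $ m) S * L2_set (\<lambda>m. C $ m $ k) S"
  unfolding matrix_mult_entry_eq_sum_subset[OF assms] by (rule abs_sum_mult_le_L2_set)

lemma norm_le_l1_entries: "norm B \<le> l1_entries B"
  for B :: "real^'c::finite^'r::finite"
proof -
  have "norm B \<le> (\<Sum>i\<in>UNIV. norm (B $ i))"
    unfolding norm_vec_def by (rule L2_set_le_sum) simp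
  also have "\<dots> \<le> l1_entries B"
    unfolding l1_entries_def by (rule sum_mono) (rule norm_le_l1_cart)
  finally show ?thesis .
qed

lemma l1_entries_add_axis:
  "l1_entries (B + axis j (axis k t)) = l1_entries B + \<bar>B $ j $ k + t\<bar> - \<bar>B $ j $ k\<bar>"
proof -
  have "l1_entries (B + axis j (axis k t)) - l1_entries B
      = (\<Sum>i\<in>UNIV. \<Sum>l\<in>UNIV. if i = j then if l = k then \<bar>B $ j $ k + t\<bar> - \<bar>B $ j $ k\<bar> else 0 else 0)"
    unfolding l1_entries_def sum_subtractf[symmetric] by (intro sum.cong refl) (simp add: axis_def)
  also have "\<dots> = \<bar>B $ j $ k + t\<bar> - \<bar>B $ j $ k\<bar>"
    by (simp add: sum.If_cases)
  finally show ?thesis by simp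
qed

lemma abs_le_max_abs: "\<bar>G $ i $ j\<bar> \<le> max_abs (G :: real^'c::finite^'r::finite)"
proof -
  have "{\<bar>G $ i $ j\<bar> | i j. True} = (\<lambda>(i, j). \<bar>G $ i $ j\<bar>) ` UNIV" by auto
  then show ?thesis unfolding max_abs_def by (intro Max_ge) auto
qed

lemma max_abs_nonneg: "0 \<le> max_abs (G :: real^'c::finite^'r::finite)"
  by (rule order_trans[OF abs_ge_zero abs_le_max_abs])

lemma transpose_cov: "transpose (cov X X) = cov X X"
  by (simp add: cov_def transpose_scalar matrix_transpose_mul)

section \<open>Row norms, singular values and block structure\<close>

lemma L2_set_le_norm_2inf_sub:
  fixes A :: "real^'c::finite^'r::finite"
  assumes "i \<in> S1"
  shows "L2_set (\<lambda>j. A $ i $ j) S2 \<le> norm_2inf_sub A S1 S2"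
  unfolding norm_2inf_sub_def L2_set_def by (rule Max_ge) (use assms in auto)

lemma norm_2inf_sub_nonneg: "0 \<le> norm_2inf_sub (A :: real^'c::finite^'r::finite) S1 S2"
  unfolding norm_2inf_sub_def by (rule Max_ge) auto

lemma norm_2inf_sub_nonpos_imp_zero:
  fixes A :: "real^'c::finite^'r::finite"
  assumes "norm_2inf_sub A S1 S2 \<le> 0" "i \<in> S1" "j \<in> S2"
  shows "A $ i $ j = 0"
proof -
  have "L2_set (\<lambda>j. A $ i $ j) S2 = 0"
    using L2_set_le_norm_2inf_sub[OF assms(2), of A S2] assms(1) L2_set_nonneg[of "\<lambda>j. A $ i $ j" S2]
    by linarith
  then show ?thesis using assms(3) by (simp add: L2_set_eq_0_iff)
qed

lemma sigma_min_sub_sq_mult_le: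
  fixes A :: "real^'r::finite^'r" and x :: "'r \<Rightarrow> real"
  assumes "0 \<le> sigma_min_sub A S"
  shows "(sigma_min_sub A S)^2 * (\<Sum>j\<in>S. (x j)^2) \<le> (\<Sum>i\<in>S. (\<Sum>j\<in>S. A $ i $ j * x j)^2)"
proof (cases "(\<Sum>j\<in>S. (x j)^2) = 0")
  case False
  define s where "s = (\<Sum>j\<in>S. (x j)^2)"
  have "0 < s" using False unfolding s_def by (simp add: less_le sum_nonneg)
  define y :: "real^'r" where "y = (\<chi> j. x j / sqrt s)"
  have "(\<Sum>j\<in>S. (y $ j)^2) = 1"
    using \<open>0 < s\<close> by (simp add: y_def power_divide sum_divide_distrib[symmetric] s_def[symmetric])
  then have "sigma_min_sub A S \<le> sqrt (\<Sum>i\<in>S. (\<Sum>j\<in>S. A $ i $ j * y $ j)^2)"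
    unfolding sigma_min_sub_def by (intro cInf_lower bdd_belowI[where m=0]) (auto simp: sum_nonneg)
  from power_mono[OF this assms, of 2]
  have "(sigma_min_sub A S)^2 \<le> (\<Sum>i\<in>S. (\<Sum>j\<in>S. A $ i $ j * y $ j)^2)"
    by (simp add: sum_nonneg)
  also have "\<dots> = (\<Sum>i\<in>S. (\<Sum>j\<in>S. A $ i $ j * x j)^2 / s)"
    using \<open>0 < s\<close>
    by (intro sum.cong refl) (simp add: y_def power_divide flip: sum_divide_distrib)
  also have "\<dots> = (\<Sum>i\<in>S. (\<Sum>j\<in>S. A $ i $ j * x j)^2) / s"
    by (rule sum_divide_distrib[symmetric])
  finally show ?thesis
    using \<open>0 < s\<close> by (simp add: s_def pos_le_divide_eq)
qed (simp add: sum_nonneg)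

lemma sigma_min_sub_le_opnorm_sub:
  fixes A :: "real^'r::finite^'r"
  assumes "S \<noteq> {}"
  shows "sigma_min_sub A S \<le> opnorm_sub A S S"
  unfolding sigma_min_sub_def opnorm_sub_def
proof (rule cInf_le_cSup)
  obtain s0 where "s0 \<in> S" using assms by blast
  then have "(\<Sum>j\<in>S. (axis s0 1 $ j)^2) = (1::real)"
    by (simp add: axis_def if_distrib[of "\<lambda>t. t^2"] cong: if_cong)
  then show "{sqrt (\<Sum>i\<in>S. (\<Sum>j\<in>S. A $ i $ j * x $ j)^2) |x. (\<Sum>j\<in>S. (x $ j)^2) = 1} \<noteq> {}"
    by blast
  show "bdd_below {sqrt (\<Sum>i\<in>S. (\<Sum>j\<in>S. A $ i $ j * x $ j)^2) |x. (\<Sum>j\<in>S. (x $ j)^2) = 1}"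
    by (rule bdd_belowI[where m=0]) (auto simp: sum_nonneg)
  show "bdd_above {sqrt (\<Sum>i\<in>S. (\<Sum>j\<in>S. A $ i $ j * x $ j)^2) |x. (\<Sum>j\<in>S. (x $ j)^2) = 1}"
  proof (rule bdd_aboveI[where M="sqrt (\<Sum>i\<in>S. \<Sum>j\<in>S. (A $ i $ j)^2)"], clarify)
    fix x :: "real^'r" assume "(\<Sum>j\<in>S. (x $ j)^2) = 1"
    then have "(\<Sum>j\<in>S. A $ i $ j * x $ j)^2 \<le> (\<Sum>j\<in>S. (A $ i $ j)^2)" for i
      using Cauchy_Schwarz_ineq_sum[of "\<lambda>j. A $ i $ j" "\<lambda>j. x $ j" S] by simp
    then show "sqrt (\<Sum>i\<in>S. (\<Sum>j\<in>S. A $ i $ j * x $ j)^2) \<le> sqrt (\<Sum>i\<in>S. \<Sum>j\<in>S. (A $ i $ j)^2)"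
      by (simp add: sum_mono)
  qed
qed

lemma tau_hat_ge:
  shows "norm_2inf_sub (cov X X) (-Su) Su * norm_2inf_sub (cov Y Y) (-Sv) Sv \<le> tau_hat X Y Su Sv"
    and "norm_2inf_sub (cov X X) (-Su) Su * opnorm_sub (cov Y Y) Sv Sv \<le> tau_hat X Y Su Sv"
    and "opnorm_sub (cov X X) Su Su * norm_2inf_sub (cov Y Y) (-Sv) Sv \<le> tau_hat X Y Su Sv"
  unfolding tau_hat_def by (auto intro: Max_ge)

lemma tau_hat_nonneg: "0 \<le> tau_hat X Y Su Sv"
  by (rule order_trans[OF mult_nonneg_nonneg tau_hat_ge(1)]) (rule norm_2inf_sub_nonneg)+

definition block_diagonal :: "real^'r^'r \<Rightarrow> 'r set \<Rightarrow> bool" where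
  "block_diagonal A S \<longleftrightarrow> (\<forall>i j. (i \<in> S \<longleftrightarrow> j \<notin> S) \<longrightarrow> A $ i $ j = 0)"

lemma block_diagonal_if_norm_2inf_sub_nonpos:
  fixes A :: "real^'r::finite^'r"
  assumes "transpose A = A" and "norm_2inf_sub A (-S) S \<le> 0"
  shows "block_diagonal A S"
  unfolding block_diagonal_def
proof (intro allI impI)
  fix i j assume "i \<in> S \<longleftrightarrow> j \<notin> S"
  then consider "i \<notin> S" "j \<in> S" | "j \<notin> S" "i \<in> S" by blast
  then show "A $ i $ j = 0"
  proof cases
    case 2
    have "A $ j $ i = 0" using norm_2inf_sub_nonpos_imp_zero[OF assms(2)] 2 by simp
    then show ?thesis using arg_cong[OF assms(1), of "\<lambda>M. M $ i $ j"] by (simp add: transpose_def)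
  qed (use norm_2inf_sub_nonpos_imp_zero[OF assms(2)] in simp)
qed

lemma tau_hat_nonpos_imp_block_diagonal:
  assumes "tau_hat X Y Su Sv \<le> 0" and "Su \<noteq> {}" "Sv \<noteq> {}"
    and "0 < sigma_min_sub (cov X X) Su" "0 < sigma_min_sub (cov Y Y) Sv"
  shows "block_diagonal (cov X X) Su \<and> block_diagonal (cov Y Y) Sv"
proof -
  have "0 < opnorm_sub (cov Y Y) Sv Sv" "0 < opnorm_sub (cov X X) Su Su"
    using sigma_min_sub_le_opnorm_sub assms by (metis less_le_trans)+
  moreover have "norm_2inf_sub (cov X X) (-Su) Su * opnorm_sub (cov Y Y) Sv Sv \<le> 0"
    and "opnorm_sub (cov X X) Su Su * norm_2inf_sub (cov Y Y) (-Sv) Sv \<le> 0"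
    using tau_hat_ge(2,3)[of X Su Y Sv] assms(1) by linarith+
  ultimately have "norm_2inf_sub (cov X X) (-Su) Su \<le> 0" "norm_2inf_sub (cov Y Y) (-Sv) Sv \<le> 0"
    by (auto simp: mult_le_0_iff)
  then show ?thesis by (simp add: block_diagonal_if_norm_2inf_sub_nonpos transpose_cov)
qed

definition frob_norm_sub :: "real^'c^'r \<Rightarrow> 'r set \<Rightarrow> 'c set \<Rightarrow> real" where
  "frob_norm_sub U S T = sqrt (\<Sum>i\<in>S. \<Sum>j\<in>T. (U $ i $ j)^2)"

lemma frob_norm_sub_nonneg: "0 \<le> frob_norm_sub U S T"
  by (simp add: frob_norm_sub_def sum_nonneg)

lemma frob_norm_sub_eq_0_iff:
  fixes U :: "real^'c::finite^'r::finite"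
  shows "frob_norm_sub U S T = 0 \<longleftrightarrow> (\<forall>i\<in>S. \<forall>j\<in>T. U $ i $ j = 0)"
  unfolding frob_norm_sub_def by (subst real_sqrt_eq_zero_cancel_iff, subst sum_sum_nonneg_eq_0_iff) auto

lemma frob_norm_sub_le_card:
  fixes U :: "real^'c::finite^'r::finite"
  assumes "\<forall>i\<in>S. \<forall>j\<in>T. \<bar>U $ i $ j\<bar> \<le> w"
  shows "frob_norm_sub U S T \<le> sqrt (real (card S) * real (card T)) * w"
proof (cases "S = {} \<or> T = {}")
  case False
  then have "0 \<le> w" using assms by force
  have "(\<Sum>i\<in>S. \<Sum>j\<in>T. (U $ i $ j)^2) \<le> (\<Sum>i\<in>S. \<Sum>j\<in>T. w^2)"
    using assms by (intro sum_mono) (metis abs_ge_zero power2_abs power_mono)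
  then have "frob_norm_sub U S T \<le> sqrt (real (card S) * real (card T) * w^2)"
    unfolding frob_norm_sub_def by (simp add: mult.assoc)
  also have "\<dots> = sqrt (real (card S) * real (card T)) * w"
    using \<open>0 \<le> w\<close> by (simp add: real_sqrt_mult)
  finally show ?thesis .
qed (auto simp: frob_norm_sub_def)

lemma frob_norm_sub_transpose: "frob_norm_sub (transpose U) T S = frob_norm_sub U S T"
  unfolding frob_norm_sub_def transpose_def by (simp, rule sum.swap)

lemma L2_set_column_le_frob_norm_sub:
  fixes U :: "real^'c::finite^'r::finite"
  assumes "k \<in> T"
  shows "L2_set (\<lambda>l. U $ l $ k) S \<le> frob_norm_sub U S T"
  unfolding L2_set_def frob_norm_sub_def
  by (intro real_sqrt_le_mono sum_mono member_le_sum) (use assms in auto)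

lemma L2_set_row_le_frob_norm_sub:
  fixes U :: "real^'c::finite^'r::finite"
  assumes "j \<in> S"
  shows "L2_set (\<lambda>m. U $ j $ m) T \<le> frob_norm_sub U S T"
  unfolding L2_set_def frob_norm_sub_def
  by (intro real_sqrt_le_mono member_le_sum) (use assms in \<open>auto intro: sum_nonneg\<close>)

lemma L2_set_column_mult_le:
  assumes "\<forall>l m. m \<notin> T \<longrightarrow> U $ l $ m = 0"
  shows "L2_set (\<lambda>l. (U ** C) $ l $ k) S \<le> frob_norm_sub U S T * L2_set (\<lambda>m. C $ m $ k) T"
proof -
  have "((U ** C) $ l $ k)^2 \<le> (\<Sum>m\<in>T. (U $ l $ m)^2) * (\<Sum>m\<in>T. (C $ m $ k)^2)" for l
    using assms by (simp add: matrix_mult_entry_eq_sum_subset[of T] Cauchy_Schwarz_ineq_sum)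
  then have "(\<Sum>l\<in>S. ((U ** C) $ l $ k)^2)
      \<le> (\<Sum>l\<in>S. \<Sum>m\<in>T. (U $ l $ m)^2) * (\<Sum>m\<in>T. (C $ m $ k)^2)"
    unfolding sum_distrib_right by (rule sum_mono)
  then show ?thesis
    unfolding L2_set_def frob_norm_sub_def real_sqrt_mult[symmetric] by (rule real_sqrt_le_mono)
qed

lemma L2_set_column_le_norm_2inf_sub:
  fixes C :: "real^'c::finite^'c"
  assumes "transpose C = C" and "k \<notin> S"
  shows "L2_set (\<lambda>m. C $ m $ k) S \<le> norm_2inf_sub C (-S) S"
proof -
  have "C $ m $ k = C $ k $ m" for m
    using arg_cong[OF assms(1), of "\<lambda>M. M $ k $ m"] by (simp add: transpose_def)
  then have "L2_set (\<lambda>m. C $ m $ k) S = L2_set (\<lambda>m. C $ k $ m) S"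
    by (intro L2_set_cong) auto
  also have "\<dots> \<le> norm_2inf_sub C (-S) S"
    using assms(2) by (intro L2_set_le_norm_2inf_sub) simp
  finally show ?thesis .
qed

lemma frob_norm_sub_mult_left:
  fixes A :: "real^'r::finite^'r" and U :: "real^'c::finite^'r"
  assumes "0 \<le> sigma_min_sub A S" and "\<forall>l k. l \<notin> S \<longrightarrow> U $ l $ k = 0"
  shows "sigma_min_sub A S * frob_norm_sub U S T \<le> frob_norm_sub (A ** U) S T"
proof -
  have "(sigma_min_sub A S)^2 * (\<Sum>l\<in>S. \<Sum>k\<in>T. (U $ l $ k)^2)
      = (\<Sum>k\<in>T. (sigma_min_sub A S)^2 * (\<Sum>l\<in>S. (U $ l $ k)^2))"
    by (subst sum.swap) (simp add: sum_distrib_left)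
  also have "\<dots> \<le> (\<Sum>k\<in>T. \<Sum>j\<in>S. (\<Sum>l\<in>S. A $ j $ l * U $ l $ k)^2)"
    by (intro sum_mono sigma_min_sub_sq_mult_le assms(1))
  also have "\<dots> = (\<Sum>j\<in>S. \<Sum>k\<in>T. ((A ** U) $ j $ k)^2)"
    using assms(2) by (subst sum.swap) (simp add: matrix_mult_entry_eq_sum_subset[of S])
  finally show ?thesis
    unfolding frob_norm_sub_def by (rule mult_sqrt_le_sqrt[OF assms(1)])
qed

lemma frob_norm_sub_mult_right:
  fixes C :: "real^'c::finite^'c" and U :: "real^'c^'r::finite"
  assumes "0 \<le> sigma_min_sub C S" and "transpose C = C" and "\<forall>l m. m \<notin> S \<longrightarrow> U $ l $ m = 0"
  shows "sigma_min_sub C S * frob_norm_sub U T S \<le> frob_norm_sub (U ** C) T S"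
proof -
  have "sigma_min_sub C S * frob_norm_sub (transpose U) S T \<le> frob_norm_sub (C ** transpose U) S T"
    using assms(3) by (intro frob_norm_sub_mult_left assms(1)) (simp add: transpose_def)
  also have "C ** transpose U = transpose (U ** C)"
    using assms(2) by (simp only: matrix_transpose_mul)
  finally show ?thesis by (simp only: frob_norm_sub_transpose)
qed

lemma sandwich_frob_norm_lower_bounds:
  fixes A :: "real^'p::finite^'p" and C :: "real^'q::finite^'q" and D :: "real^'q^'p"
  assumes "supported_on D Su Sv" and "transpose C = C"
    and "0 \<le> sigma_min_sub A Su" and "0 \<le> sigma_min_sub C Sv"
  shows "sigma_min_sub A Su * frob_norm_sub (D ** C) Su Sv \<le> frob_norm_sub (A ** D ** C) Su Sv"
    and "sigma_min_sub C Sv * frob_norm_sub (A ** D) Su Sv \<le> frob_norm_sub (A ** D ** C) Su Sv"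
    and "sigma_min_sub A Su * sigma_min_sub C Sv * frob_norm_sub D Su Sv
           \<le> frob_norm_sub (A ** D ** C) Su Sv"
proof -
  have D0: "D $ l $ m = 0" if "\<not> (l \<in> Su \<and> m \<in> Sv)" for l m
    using assms(1) that by (simp add: supported_on_iff)
  have rows: "\<forall>l k. l \<notin> Su \<longrightarrow> (D ** C) $ l $ k = 0"
    and cols: "\<forall>l m. m \<notin> Sv \<longrightarrow> (A ** D) $ l $ m = 0"
    and "\<forall>l m. m \<notin> Sv \<longrightarrow> D $ l $ m = 0"
    by (simp_all add: matrix_matrix_mult_def D0)
  have "sigma_min_sub A Su * frob_norm_sub (D ** C) Su Sv \<le> frob_norm_sub (A ** (D ** C)) Su Sv"
    by (rule frob_norm_sub_mult_left[OF assms(3) rows])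
  then show left: "sigma_min_sub A Su * frob_norm_sub (D ** C) Su Sv \<le> frob_norm_sub (A ** D ** C) Su Sv"
    by (simp only: matrix_mul_assoc)
  show "sigma_min_sub C Sv * frob_norm_sub (A ** D) Su Sv \<le> frob_norm_sub (A ** D ** C) Su Sv"
    by (rule frob_norm_sub_mult_right[OF assms(4,2) cols])
  have "sigma_min_sub C Sv * frob_norm_sub D Su Sv \<le> frob_norm_sub (D ** C) Su Sv"
    by (rule frob_norm_sub_mult_right[OF assms(4,2)]) fact
  from mult_left_mono[OF this assms(3)] left
  show "sigma_min_sub A Su * sigma_min_sub C Sv * frob_norm_sub D Su Sv
           \<le> frob_norm_sub (A ** D ** C) Su Sv"
    by (simp add: mult.assoc)
qed

lemma sandwich_frob_norm_upper_bounds: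
  fixes A :: "real^'p::finite^'p" and C :: "real^'q::finite^'q" and D :: "real^'q^'p"
  assumes "supported_on D Su Sv" and "transpose C = C"
    and "0 < sigma_min_sub A Su" and "0 < sigma_min_sub C Sv"
    and w: "frob_norm_sub (A ** D ** C) Su Sv \<le> w"
  defines "Q \<equiv> w / (sigma_min_sub A Su * sigma_min_sub C Sv)"
  shows "0 \<le> Q" and "frob_norm_sub D Su Sv \<le> Q"
    and "frob_norm_sub (D ** C) Su Sv \<le> sigma_min_sub C Sv * Q"
    and "frob_norm_sub (A ** D) Su Sv \<le> sigma_min_sub A Su * Q"
proof -
  note lower = sandwich_frob_norm_lower_bounds[OF assms(1,2) less_imp_le[OF assms(3)]
      less_imp_le[OF assms(4)]]
  have "0 < sigma_min_sub A Su * sigma_min_sub C Sv"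
    using assms(3,4) by simp
  then show "0 \<le> Q"
    unfolding Q_def using w frob_norm_sub_nonneg[of "A ** D ** C" Su Sv] by simp
  show "frob_norm_sub D Su Sv \<le> Q"
    unfolding Q_def pos_le_divide_eq[OF \<open>0 < sigma_min_sub A Su * sigma_min_sub C Sv\<close>]
    using lower(3) w by (simp add: mult.commute)
  show "frob_norm_sub (D ** C) Su Sv \<le> sigma_min_sub C Sv * Q"
    using lower(1) w assms(3,4) by (simp add: Q_def field_simps)
  show "frob_norm_sub (A ** D) Su Sv \<le> sigma_min_sub A Su * Q"
    using lower(2) w assms(3,4) by (simp add: Q_def field_simps)
qed

lemma sandwich_zero_on_support:
  fixes A :: "real^'p::finite^'p" and C :: "real^'q::finite^'q" and D :: "real^'q^'p"
  assumes "0 < sigma_min_sub A Su" "0 < sigma_min_sub C Sv" "transpose C = C"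
    and zero: "\<forall>j\<in>Su. \<forall>k\<in>Sv. (A ** D ** C) $ j $ k = 0"
    and cross: "\<forall>j\<in>Su. \<forall>k\<in>Sv. \<forall>l m. \<not> (l \<in> Su \<and> m \<in> Sv) \<longrightarrow> A $ j $ l * D $ l $ m * C $ m $ k = 0"
  shows "\<forall>l\<in>Su. \<forall>m\<in>Sv. D $ l $ m = 0"
proof -
  define DS :: "real^'q^'p" where "DS = (\<chi> l m. if l \<in> Su \<and> m \<in> Sv then D $ l $ m else 0)"
  have "supported_on DS Su Sv" by (simp add: DS_def supported_on_def)
  have "(A ** DS ** C) $ j $ k = (A ** D ** C) $ j $ k" if "j \<in> Su" "k \<in> Sv" for j k
    unfolding matrix_sandwich_entry using cross that by (intro sum.cong refl) (auto simp: DS_def)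
  then have "frob_norm_sub (A ** DS ** C) Su Sv = 0"
    using zero by (simp add: frob_norm_sub_eq_0_iff)
  with sandwich_frob_norm_lower_bounds(3)[OF \<open>supported_on DS Su Sv\<close> assms(3)
      less_imp_le[OF assms(1)] less_imp_le[OF assms(2)]]
  have "(sigma_min_sub A Su * sigma_min_sub C Sv) * frob_norm_sub DS Su Sv \<le> 0"
    by simp
  with assms(1,2) frob_norm_sub_nonneg[of DS Su Sv] have "frob_norm_sub DS Su Sv = 0"
    by (smt (verit) mult_pos_pos mult_le_0_iff)
  then show ?thesis by (simp add: frob_norm_sub_eq_0_iff DS_def)
qed

lemma sandwich_off_support_bound:
  fixes A :: "real^'p::finite^'p" and C :: "real^'q::finite^'q" and D :: "real^'q^'p"
  assumes supp: "supported_on D Su Sv" and C_sym: "transpose C = C" and "Su \<noteq> {}" "Sv \<noteq> {}"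
    and \<sigma>A: "0 < sigma_min_sub A Su" and \<sigma>C: "0 < sigma_min_sub C Sv"
    and \<tau>1: "norm_2inf_sub A (-Su) Su * norm_2inf_sub C (-Sv) Sv \<le> \<tau>"
    and \<tau>2: "norm_2inf_sub A (-Su) Su * opnorm_sub C Sv Sv \<le> \<tau>"
    and \<tau>3: "opnorm_sub A Su Su * norm_2inf_sub C (-Sv) Sv \<le> \<tau>"
    and w: "frob_norm_sub (A ** D ** C) Su Sv \<le> w"
    and off: "\<not> (j \<in> Su \<and> k \<in> Sv)"
  shows "\<bar>(A ** D ** C) $ j $ k\<bar> \<le> \<tau> * (w / (sigma_min_sub A Su * sigma_min_sub C Sv))"
proof -
  define Q where "Q = w / (sigma_min_sub A Su * sigma_min_sub C Sv)"
  note bounds = sandwich_frob_norm_upper_bounds[OF supp C_sym \<sigma>A \<sigma>C w, folded Q_def]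
  have \<sigma>_le_op: "sigma_min_sub A Su * Q \<le> opnorm_sub A Su Su * Q"
    "sigma_min_sub C Sv * Q \<le> opnorm_sub C Sv Sv * Q"
    using sigma_min_sub_le_opnorm_sub \<open>Su \<noteq> {}\<close> \<open>Sv \<noteq> {}\<close> bounds(1) by (blast intro: mult_right_mono)+
  have a: "L2_set (\<lambda>l. A $ j $ l) Su \<le> norm_2inf_sub A (-Su) Su" if "j \<notin> Su"
    using that by (intro L2_set_le_norm_2inf_sub) simp
  have c: "L2_set (\<lambda>m. C $ m $ k) Sv \<le> norm_2inf_sub C (-Sv) Sv" if "k \<notin> Sv"
    using C_sym that by (rule L2_set_column_le_norm_2inf_sub)
  have DC_col: "\<bar>(A ** D ** C) $ j $ k\<bar> \<le> L2_set (\<lambda>l. A $ j $ l) Su * L2_set (\<lambda>l. (D ** C) $ l $ k) Su"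
  proof -
    have "\<forall>l. l \<notin> Su \<longrightarrow> A $ j $ l * (D ** C) $ l $ k = 0"
      using supp by (simp add: supported_on_iff matrix_matrix_mult_def)
    from abs_matrix_mult_entry_le[OF this] show ?thesis
      by (simp only: matrix_mul_assoc)
  qed
  have nonneg: "0 \<le> norm_2inf_sub A (-Su) Su" "0 \<le> norm_2inf_sub C (-Sv) Sv"
    "0 \<le> L2_set f S" for f and S :: "'a set"
    by (rule norm_2inf_sub_nonneg L2_set_nonneg)+
  consider (row) "j \<notin> Su" "k \<in> Sv" | (corner) "j \<notin> Su" "k \<notin> Sv" | (column) "j \<in> Su" "k \<notin> Sv"
    using off by blast
  then show ?thesis
  proof cases
    case row
    have "L2_set (\<lambda>l. (D ** C) $ l $ k) Su \<le> opnorm_sub C Sv Sv * Q"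
      using L2_set_column_le_frob_norm_sub[OF row(2), of "D ** C" Su] bounds(3) \<sigma>_le_op(2) by linarith
    from DC_col mult_mono[OF a[OF row(1)] this nonneg(1) nonneg(3)]
    have "\<bar>(A ** D ** C) $ j $ k\<bar> \<le> norm_2inf_sub A (-Su) Su * (opnorm_sub C Sv Sv * Q)"
      by (rule order_trans)
    also have "\<dots> = (norm_2inf_sub A (-Su) Su * opnorm_sub C Sv Sv) * Q"
      by (simp add: mult.assoc)
    also have "\<dots> \<le> \<tau> * Q"
      using \<tau>2 bounds(1) by (rule mult_right_mono)
    finally show ?thesis unfolding Q_def .
  next
    case corner
    have "L2_set (\<lambda>l. (D ** C) $ l $ k) Su \<le> frob_norm_sub D Su Sv * L2_set (\<lambda>m. C $ m $ k) Sv"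
      using supp by (intro L2_set_column_mult_le) (simp add: supported_on_iff)
    also have "\<dots> \<le> Q * norm_2inf_sub C (-Sv) Sv"
      using bounds(2) c[OF corner(2)] bounds(1) nonneg(3) by (rule mult_mono)
    finally have "L2_set (\<lambda>l. (D ** C) $ l $ k) Su \<le> Q * norm_2inf_sub C (-Sv) Sv" .
    from DC_col mult_mono[OF a[OF corner(1)] this nonneg(1) nonneg(3)]
    have "\<bar>(A ** D ** C) $ j $ k\<bar> \<le> norm_2inf_sub A (-Su) Su * (Q * norm_2inf_sub C (-Sv) Sv)"
      by (rule order_trans)
    also have "\<dots> = (norm_2inf_sub A (-Su) Su * norm_2inf_sub C (-Sv) Sv) * Q"
      by (simp add: mult_ac)
    also have "\<dots> \<le> \<tau> * Q"
      using \<tau>1 bounds(1) by (rule mult_right_mono)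
    finally show ?thesis unfolding Q_def .
  next
    case column
    have "\<bar>(A ** D ** C) $ j $ k\<bar> \<le> L2_set (\<lambda>m. (A ** D) $ j $ m) Sv * L2_set (\<lambda>m. C $ m $ k) Sv"
      using supp by (intro abs_matrix_mult_entry_le) (simp add: supported_on_iff matrix_matrix_mult_def)
    also have "\<dots> \<le> (opnorm_sub A Su Su * Q) * norm_2inf_sub C (-Sv) Sv"
    proof (rule mult_mono)
      show "L2_set (\<lambda>m. (A ** D) $ j $ m) Sv \<le> opnorm_sub A Su Su * Q"
        using L2_set_row_le_frob_norm_sub[OF column(1), of "A ** D" Sv] bounds(4) \<sigma>_le_op(1) by linarith
      show "0 \<le> opnorm_sub A Su Su * Q"
        using \<sigma>_le_op(1) \<sigma>A bounds(1) by (smt (verit) mult_nonneg_nonneg)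
    qed (use c[OF column(2)] nonneg(3) in auto)
    also have "\<dots> = (opnorm_sub A Su Su * norm_2inf_sub C (-Sv) Sv) * Q"
      by (simp add: mult_ac)
    also have "\<dots> \<le> \<tau> * Q"
      using \<tau>3 bounds(1) by (rule mult_right_mono)
    finally show ?thesis unfolding Q_def .
  qed
qed

section \<open>The objective\<close>

definition cca_fit :: "real^'p^'n::finite \<Rightarrow> real^'q^'n \<Rightarrow> real^'q^'p \<Rightarrow> real^'n^'n" where
  "cca_fit X Y B = (1 / real CARD('n)) *\<^sub>R (X ** B ** transpose Y)"

definition cca_grad :: "real^'p::finite^'n::finite \<Rightarrow> real^'q::finite^'n \<Rightarrow> real^'q^'p \<Rightarrow> real^'q^'p" where
  "cca_grad X Y B = cov X X ** B ** cov Y Y - cov X Y"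

lemma cca_fit_diff: "cca_fit X Y (B - B') = cca_fit X Y B - cca_fit X Y B'"
  by (simp add: cca_fit_def matrix_sandwich_diff scaleR_diff_right)

lemma cca_fit_scaleR: "cca_fit X Y (t *\<^sub>R B) = t *\<^sub>R cca_fit X Y B"
  by (simp add: cca_fit_def matrix_scalar_ac scalar_matrix_assoc)

lemma cov_sandwich_eq:
  "cov X X ** D ** cov Y Y = (1 / real CARD('n)) *\<^sub>R (transpose X ** cca_fit X Y D ** Y)"
  for X :: "real^'p::finite^'n::finite" and Y :: "real^'q::finite^'n"
  by (simp add: cov_def cca_fit_def scalar_matrix_assoc matrix_scalar_ac matrix_mul_assoc)

lemma inner_cca_grad:
  "inner (cca_grad X Y B) D = inner (cca_fit X Y B - mat 1) (cca_fit X Y D)"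
proof -
  have "inner (cov X X ** B ** cov Y Y) D = inner (cca_fit X Y B) (cca_fit X Y D)"
    by (simp add: cov_sandwich_eq cca_fit_def inner_sandwich)
  moreover have "inner (cov X Y) D = inner (mat 1) (cca_fit X Y D)"
    by (simp add: cov_def cca_fit_def inner_sandwich[of "mat 1", simplified])
  ultimately show ?thesis by (simp add: cca_grad_def inner_diff_left)
qed

lemma cca_obj_eq_norm:
  "cca_obj X Y \<rho> B = 1/2 * (norm (cca_fit X Y B - mat 1))^2 + \<rho> * l1_entries B"
  by (simp add: cca_obj_def cca_fit_def frob_sq_eq_norm)

lemma cca_obj_expansion:
  "cca_obj X Y \<rho> B = cca_obj X Y \<rho> B0 + inner (cca_grad X Y B0) (B - B0)
     + 1/2 * (norm (cca_fit X Y (B - B0)))^2 + \<rho> * (l1_entries B - l1_entries B0)"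
proof -
  have split: "cca_fit X Y B - mat 1 = (cca_fit X Y B0 - mat 1) + cca_fit X Y (B - B0)"
    by (simp add: cca_fit_diff)
  have "(norm (cca_fit X Y B - mat 1))^2 = (norm (cca_fit X Y B0 - mat 1))^2
      + 2 * inner (cca_grad X Y B0) (B - B0) + (norm (cca_fit X Y (B - B0)))^2"
    using dot_norm[of "cca_fit X Y B0 - mat 1" "cca_fit X Y (B - B0)"]
    unfolding split inner_cca_grad by (simp add: field_simps)
  then show ?thesis by (simp add: cca_obj_eq_norm algebra_simps)
qed

lemma l1_entries_le_cca_obj: "\<rho> * l1_entries B \<le> cca_obj X Y \<rho> B"
  by (simp add: cca_obj_eq_norm)

lemma continuous_on_cca_obj: "continuous_on UNIV (cca_obj X Y \<rho>)"
  unfolding cca_obj_eq_norm[abs_def] cca_fit_def l1_entries_def matrix_matrix_mult_def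
  by (intro continuous_intros)

lemma cca_obj_attains_min_on_closed:
  assumes "\<rho> > 0" "closed V" "V \<noteq> {}"
  shows "\<exists>B0\<in>V. \<forall>B\<in>V. cca_obj X Y \<rho> B0 \<le> cca_obj X Y \<rho> B"
proof -
  obtain B1 where "B1 \<in> V" using assms(3) by blast
  define K where "K = V \<inter> cball 0 (cca_obj X Y \<rho> B1 / \<rho>)"
  have norm_le: "\<rho> * norm B \<le> cca_obj X Y \<rho> B" for B
    using mult_left_mono[OF norm_le_l1_entries less_imp_le[OF assms(1)]] l1_entries_le_cca_obj
    by (rule order_trans)
  have "compact K"
    unfolding K_def using assms(2) by (intro closed_Int_compact compact_cball)
  moreover have "B1 \<in> K"
    using \<open>B1 \<in> V\<close> norm_le[of B1] assms(1) by (simp add: K_def pos_le_divide_eq mult.commute)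
  moreover have "continuous_on K (cca_obj X Y \<rho>)"
    using continuous_on_cca_obj by (rule continuous_on_subset) simp
  ultimately obtain B0 where "B0 \<in> K" and B0_min: "\<forall>B\<in>K. cca_obj X Y \<rho> B0 \<le> cca_obj X Y \<rho> B"
    using continuous_attains_inf by blast
  have "cca_obj X Y \<rho> B0 \<le> cca_obj X Y \<rho> B" if "B \<in> V" for B
  proof (cases "B \<in> K")
    case False
    then have "cca_obj X Y \<rho> B1 < \<rho> * norm B"
      using that assms(1) by (simp add: K_def not_le pos_divide_less_eq mult.commute)
    then show ?thesis using B0_min \<open>B1 \<in> K\<close> norm_le[of B] by fastforce
  qed (use B0_min in blast)
  with \<open>B0 \<in> K\<close> show ?thesis unfolding K_def by blast
qed

lemma cca_restricted_minimizer_subgradient: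
  fixes B0 :: "real^'q::finite^'p::finite"
  assumes "0 \<le> \<rho>" and "supported_on B0 Su Sv"
    and min: "\<forall>B. supported_on B Su Sv \<longrightarrow> cca_obj X Y \<rho> B0 \<le> cca_obj X Y \<rho> B"
    and "j \<in> Su" "k \<in> Sv"
  shows "\<bar>cca_grad X Y B0 $ j $ k\<bar> \<le> \<rho>"
    and "- cca_grad X Y B0 $ j $ k * B0 $ j $ k = \<rho> * \<bar>B0 $ j $ k\<bar>"
proof -
  define E :: "real^'q^'p" where "E = axis j (axis k 1)"
  define c where "c = 1/2 * (norm (cca_fit X Y E))^2"
  have "0 \<le> t * cca_grad X Y B0 $ j $ k + c * t^2 + \<rho> * (\<bar>B0 $ j $ k + t\<bar> - \<bar>B0 $ j $ k\<bar>)"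
    for t
  proof -
    have "axis j (axis k t) = t *\<^sub>R E"
      by (simp add: E_def axis_def vec_eq_iff)
    then have fit_t: "cca_fit X Y (axis j (axis k t)) = t *\<^sub>R cca_fit X Y E"
      by (simp add: cca_fit_scaleR)
    have "supported_on (B0 + axis j (axis k t)) Su Sv"
      using assms(2,4,5) by (auto simp: supported_on_def axis_def)
    then have "cca_obj X Y \<rho> B0 \<le> cca_obj X Y \<rho> (B0 + axis j (axis k t))"
      using min by blast
    then show ?thesis
      unfolding cca_obj_expansion[of X Y \<rho> "B0 + axis j (axis k t)" B0]
      by (simp add: inner_axis l1_entries_add_axis fit_t c_def power_mult_distrib algebra_simps)
  qed
  then show "\<bar>cca_grad X Y B0 $ j $ k\<bar> \<le> \<rho>"
    and "- cca_grad X Y B0 $ j $ k * B0 $ j $ k = \<rho> * \<bar>B0 $ j $ k\<bar>"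
    by (rule abs_penalty_stationary[OF assms(1)])+
qed

section \<open>Dual certificates\<close>

definition cca_certificate ::
    "real^'p^'n::finite \<Rightarrow> real^'q^'n \<Rightarrow> real \<Rightarrow> real^'q^'p \<Rightarrow> real^'q^'p \<Rightarrow> bool" where
  "cca_certificate X Y \<rho> B0 Z \<longleftrightarrow> cca_grad X Y B0 = - \<rho> *\<^sub>R Z
     \<and> (\<forall>i j. \<bar>Z $ i $ j\<bar> \<le> 1) \<and> (\<forall>i j. Z $ i $ j * B0 $ i $ j = \<bar>B0 $ i $ j\<bar>)"

lemma inner_le_l1_entries_iff:
  assumes "\<forall>i j. \<bar>Z $ i $ j\<bar> \<le> 1"
  shows "inner Z B \<le> l1_entries B"
    and "inner Z B = l1_entries B \<longleftrightarrow> (\<forall>i j. Z $ i $ j * B $ i $ j = \<bar>B $ i $ j\<bar>)"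
proof -
  have nonneg: "0 \<le> \<bar>B $ i $ j\<bar> - Z $ i $ j * B $ i $ j" for i j
    using mult_le_abs_if_abs_le_1[of "Z $ i $ j" "B $ i $ j"] assms by simp
  have gap: "l1_entries B - inner Z B = (\<Sum>i\<in>UNIV. \<Sum>j\<in>UNIV. \<bar>B $ i $ j\<bar> - Z $ i $ j * B $ i $ j)"
    by (simp add: l1_entries_def inner_matrix sum_subtractf)
  also have "\<dots> \<ge> 0"
    by (intro sum_nonneg nonneg)
  finally show "inner Z B \<le> l1_entries B" by simp
  have "inner Z B = l1_entries B \<longleftrightarrow> (\<Sum>i\<in>UNIV. \<Sum>j\<in>UNIV. \<bar>B $ i $ j\<bar> - Z $ i $ j * B $ i $ j) = 0"
    unfolding gap[symmetric] by linarith
  also have "\<dots> \<longleftrightarrow> (\<forall>i j. Z $ i $ j * B $ i $ j = \<bar>B $ i $ j\<bar>)"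
    by (subst sum_sum_nonneg_eq_0_iff) (use nonneg in auto)
  finally show "inner Z B = l1_entries B \<longleftrightarrow> (\<forall>i j. Z $ i $ j * B $ i $ j = \<bar>B $ i $ j\<bar>)" .
qed

lemma cca_obj_certificate_eq:
  assumes "cca_certificate X Y \<rho> B0 Z"
  shows "cca_obj X Y \<rho> B = cca_obj X Y \<rho> B0 + 1/2 * (norm (cca_fit X Y (B - B0)))^2
           + \<rho> * (l1_entries B - inner Z B)"
proof -
  have "inner Z B0 = l1_entries B0"
    using assms inner_le_l1_entries_iff(2) by (auto simp: cca_certificate_def)
  then show ?thesis
    using assms cca_obj_expansion[of X Y \<rho> B B0]
    by (simp add: cca_certificate_def inner_diff_right algebra_simps)
qed

lemma cca_certificate_minimizer:
  assumes "0 \<le> \<rho>" and "cca_certificate X Y \<rho> B0 Z"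
  shows "cca_obj X Y \<rho> B0 \<le> cca_obj X Y \<rho> B"
proof -
  have "inner Z B \<le> l1_entries B"
    using assms(2) by (intro inner_le_l1_entries_iff(1)) (simp add: cca_certificate_def)
  then show ?thesis
    using cca_obj_certificate_eq[OF assms(2), of B] assms(1) by (simp add: mult_nonneg_nonneg)
qed

lemma cca_certificate_other_minimizer:
  assumes "0 < \<rho>" and "cca_certificate X Y \<rho> B0 Z" and "cca_obj X Y \<rho> B \<le> cca_obj X Y \<rho> B0"
  shows "cca_fit X Y (B - B0) = 0" and "\<forall>i j. Z $ i $ j * B $ i $ j = \<bar>B $ i $ j\<bar>"
proof -
  have "0 \<le> l1_entries B - inner Z B"
    using assms(2) by (simp add: inner_le_l1_entries_iff(1) cca_certificate_def)
  then have "0 \<le> \<rho> * (l1_entries B - inner Z B)"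
    using assms(1) by simp
  moreover have "1/2 * (norm (cca_fit X Y (B - B0)))^2 + \<rho> * (l1_entries B - inner Z B) \<le> 0"
    using assms(3) cca_obj_certificate_eq[OF assms(2), of B] by simp
  ultimately have "(norm (cca_fit X Y (B - B0)))^2 = 0" and "\<rho> * (l1_entries B - inner Z B) = 0"
    using zero_le_power2[of "norm (cca_fit X Y (B - B0))"] by linarith+
  then have "(norm (cca_fit X Y (B - B0)))^2 = 0" and "l1_entries B - inner Z B = 0"
    using assms(1) by simp_all
  moreover have "\<forall>i j. \<bar>Z $ i $ j\<bar> \<le> 1"
    using assms(2) by (simp add: cca_certificate_def)
  ultimately show "cca_fit X Y (B - B0) = 0" and "\<forall>i j. Z $ i $ j * B $ i $ j = \<bar>B $ i $ j\<bar>"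
    using inner_le_l1_entries_iff(2)[of Z B] by simp_all
qed

lemma cca_certificate_minimizer_eq_if_agree_on_support:
  assumes "0 < \<rho>" and cert: "cca_certificate X Y \<rho> B0 Z"
    and "cca_obj X Y \<rho> B \<le> cca_obj X Y \<rho> B0" and "supported_on B0 Su Sv"
    and agree: "\<forall>i\<in>Su. \<forall>j\<in>Sv. B $ i $ j = B0 $ i $ j"
  shows "B = B0"
proof -
  note fit = cca_certificate_other_minimizer[OF assms(1-3)]
  have "inner (cca_grad X Y B0) (B - B0) = 0"
    by (simp add: inner_cca_grad fit(1))
  then have "inner Z B = inner Z B0"
    using cert assms(1) by (simp add: cca_certificate_def inner_diff_right)
  moreover have "inner Z B = l1_entries B" "inner Z B0 = l1_entries B0"
    using cert fit(2) by (simp_all add: inner_le_l1_entries_iff(2) cca_certificate_def)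
  ultimately have "l1_entries B = l1_entries B0"
    by simp
  then have "(\<Sum>i\<in>UNIV. \<Sum>j\<in>UNIV. \<bar>B $ i $ j\<bar> - \<bar>B0 $ i $ j\<bar>) = 0"
    by (simp add: l1_entries_def sum_subtractf)
  moreover have off: "B0 $ i $ j = 0" if "\<not> (i \<in> Su \<and> j \<in> Sv)" for i j
    using assms(4) that by (simp add: supported_on_iff)
  then have "0 \<le> \<bar>B $ i $ j\<bar> - \<bar>B0 $ i $ j\<bar>" for i j
    using agree by (cases "i \<in> Su \<and> j \<in> Sv") auto
  ultimately have abs_eq: "\<bar>B $ i $ j\<bar> = \<bar>B0 $ i $ j\<bar>" for i j
    using sum_sum_nonneg_eq_0_iff[of UNIV UNIV "\<lambda>i j. \<bar>B $ i $ j\<bar> - \<bar>B0 $ i $ j\<bar>"] by simp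
  have "B $ i $ j = B0 $ i $ j" for i j
    using agree off[of i j] abs_eq[of i j] by (cases "i \<in> Su \<and> j \<in> Sv") auto
  then show ?thesis
    by (simp add: vec_eq_iff)
qed

lemma cca_certificate_unique_minimizer:
  fixes X :: "real^'p::finite^'n::finite" and Y :: "real^'q::finite^'n" and B0 :: "real^'q^'p"
  assumes "0 < \<rho>" and "0 < sigma_min_sub (cov X X) Su" and "0 < sigma_min_sub (cov Y Y) Sv"
    and supp: "supported_on B0 Su Sv" and cert: "cca_certificate X Y \<rho> B0 Z"
    and strict_or_block: "(\<forall>j k. \<not> (j \<in> Su \<and> k \<in> Sv) \<longrightarrow> \<bar>Z $ j $ k\<bar> < 1)
       \<or> block_diagonal (cov X X) Su \<and> block_diagonal (cov Y Y) Sv"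
  shows "(\<forall>B'. cca_obj X Y \<rho> B \<le> cca_obj X Y \<rho> B') \<longleftrightarrow> B = B0"
proof
  assume "\<forall>B'. cca_obj X Y \<rho> B \<le> cca_obj X Y \<rho> B'"
  then have le: "cca_obj X Y \<rho> B \<le> cca_obj X Y \<rho> B0" by blast
  note other = cca_certificate_other_minimizer[OF assms(1) cert le]
  define D where "D = B - B0"
  have cross: "\<forall>j\<in>Su. \<forall>k\<in>Sv. \<forall>l m. \<not> (l \<in> Su \<and> m \<in> Sv)
      \<longrightarrow> cov X X $ j $ l * D $ l $ m * cov Y Y $ m $ k = 0"
    using strict_or_block
  proof
    assume strict: "\<forall>j k. \<not> (j \<in> Su \<and> k \<in> Sv) \<longrightarrow> \<bar>Z $ j $ k\<bar> < 1"
    have "D $ l $ m = 0" if "\<not> (l \<in> Su \<and> m \<in> Sv)" for l m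
      using eq_0_if_mult_eq_abs[of "Z $ l $ m" "B $ l $ m"] strict other(2) supp that
      by (simp add: D_def supported_on_iff)
    then show ?thesis by simp
  next
    assume "block_diagonal (cov X X) Su \<and> block_diagonal (cov Y Y) Sv"
    then show ?thesis by (auto simp: block_diagonal_def)
  qed
  have "\<forall>j\<in>Su. \<forall>k\<in>Sv. (cov X X ** D ** cov Y Y) $ j $ k = 0"
    by (simp add: cov_sandwich_eq other(1) D_def)
  from sandwich_zero_on_support[OF assms(2,3) transpose_cov this cross]
  show "B = B0"
    by (intro cca_certificate_minimizer_eq_if_agree_on_support[OF assms(1) cert le supp])
      (simp add: D_def)
next
  assume "B = B0"
  then show "\<forall>B'. cca_obj X Y \<rho> B \<le> cca_obj X Y \<rho> B'"
    using cca_certificate_minimizer[OF _ cert] assms(1) by simp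
qed

lemma cca_certificate_of_restricted_minimizer:
  fixes B0 :: "real^'q::finite^'p::finite"
  assumes "0 < \<rho>" and supp: "supported_on B0 Su Sv"
    and min: "\<forall>B. supported_on B Su Sv \<longrightarrow> cca_obj X Y \<rho> B0 \<le> cca_obj X Y \<rho> B"
    and off: "\<forall>j k. \<not> (j \<in> Su \<and> k \<in> Sv) \<longrightarrow> \<bar>cca_grad X Y B0 $ j $ k\<bar> \<le> \<rho>"
  shows "cca_certificate X Y \<rho> B0 (- (1 / \<rho>) *\<^sub>R cca_grad X Y B0)"
proof -
  note kkt = cca_restricted_minimizer_subgradient[OF less_imp_le[OF assms(1)] supp min]
  have "\<bar>cca_grad X Y B0 $ j $ k\<bar> \<le> \<rho>" for j k
    using kkt(1) off by (cases "j \<in> Su \<and> k \<in> Sv") auto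
  moreover have "- cca_grad X Y B0 $ j $ k * B0 $ j $ k = \<rho> * \<bar>B0 $ j $ k\<bar>" for j k
    using kkt(2) supp by (cases "j \<in> Su \<and> k \<in> Sv") (auto simp: supported_on_iff)
  ultimately show ?thesis
    using assms(1) by (simp add: cca_certificate_def field_simps)
qed

section \<open>The primal-dual witness\<close>

lemma cca_grad_off_support_bound:
  fixes X :: "real^'p::finite^'n::finite" and Y :: "real^'q::finite^'n" and B0 Bstar :: "real^'q^'p"
  defines "g \<equiv> max_abs (cov X Y - cov X X ** Bstar ** cov Y Y)"
  assumes "Su \<noteq> {}" "Sv \<noteq> {}" "supported_on Bstar Su Sv" "supported_on B0 Su Sv"
    and on_support: "\<forall>j\<in>Su. \<forall>k\<in>Sv. \<bar>cca_grad X Y B0 $ j $ k\<bar> \<le> \<rho>"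
    and "0 < sigma_min_sub (cov X X) Su" "0 < sigma_min_sub (cov Y Y) Sv"
    and off: "\<not> (j \<in> Su \<and> k \<in> Sv)"
  shows "\<bar>cca_grad X Y B0 $ j $ k\<bar> \<le> g + tau_hat X Y Su Sv *
     (sqrt (real (card Su) * real (card Sv)) * (\<rho> + g)
      / (sigma_min_sub (cov X X) Su * sigma_min_sub (cov Y Y) Sv))"
proof -
  define G where "G = cov X Y - cov X X ** Bstar ** cov Y Y"
  define D where "D = B0 - Bstar"
  have D_supp: "supported_on D Su Sv"
    using assms(4,5) by (simp add: D_def supported_on_iff)
  have sandwich: "cov X X ** D ** cov Y Y = cca_grad X Y B0 + G"
    by (simp add: D_def G_def matrix_sandwich_diff cca_grad_def)
  have G_le: "\<bar>G $ i $ l\<bar> \<le> g" for i l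
    unfolding g_def G_def by (rule abs_le_max_abs)
  have "\<forall>i\<in>Su. \<forall>l\<in>Sv. \<bar>(cov X X ** D ** cov Y Y) $ i $ l\<bar> \<le> \<rho> + g"
  proof (intro ballI)
    fix i l assume "i \<in> Su" "l \<in> Sv"
    then show "\<bar>(cov X X ** D ** cov Y Y) $ i $ l\<bar> \<le> \<rho> + g"
      using on_support G_le[of i l] abs_triangle_ineq[of "cca_grad X Y B0 $ i $ l" "G $ i $ l"]
      unfolding sandwich by fastforce
  qed
  then have "frob_norm_sub (cov X X ** D ** cov Y Y) Su Sv \<le> sqrt (real (card Su) * real (card Sv)) * (\<rho> + g)"
    by (rule frob_norm_sub_le_card)
  from sandwich_off_support_bound[OF D_supp transpose_cov assms(2,3,7,8) tau_hat_ge this off]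
  have "\<bar>(cca_grad X Y B0 + G) $ j $ k\<bar> \<le> tau_hat X Y Su Sv *
     (sqrt (real (card Su) * real (card Sv)) * (\<rho> + g)
      / (sigma_min_sub (cov X X) Su * sigma_min_sub (cov Y Y) Sv))"
    by (simp only: sandwich)
  then show ?thesis
    using G_le[of j k] by simp
qed

lemma cca_primal_dual_witness:
  fixes X :: "real^'p::finite^'n::finite" and Y :: "real^'q::finite^'n" and Bstar :: "real^'q^'p"
    and Su :: "'p set" and Sv :: "'q set" and \<rho> :: real
  defines "g \<equiv> max_abs (cov X Y - cov X X ** Bstar ** cov Y Y)"
  defines "R \<equiv> tau_hat X Y Su Sv * (sqrt (real (card Su) * real (card Sv)) * (\<rho> + g)
      / (sigma_min_sub (cov X X) Su * sigma_min_sub (cov Y Y) Sv))"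
  assumes \<rho>: "0 < \<rho>" and ne: "Su \<noteq> {}" "Sv \<noteq> {}" and supp: "supported_on Bstar Su Sv"
    and \<sigma>: "0 < sigma_min_sub (cov X X) Su" "0 < sigma_min_sub (cov Y Y) Sv"
    and budget: "g + 2 * R \<le> \<rho>"
  obtains B0 where "supported_on B0 Su Sv"
    and "\<And>B. (\<forall>B'. cca_obj X Y \<rho> B \<le> cca_obj X Y \<rho> B') \<longleftrightarrow> B = B0"
proof -
  have "0 \<in> {B. supported_on B Su Sv}"
    by (simp add: supported_on_def)
  then obtain B0 where supp0: "supported_on B0 Su Sv"
    and min0: "\<forall>B. supported_on B Su Sv \<longrightarrow> cca_obj X Y \<rho> B0 \<le> cca_obj X Y \<rho> B"
    using cca_obj_attains_min_on_closed[OF \<rho> closed_supported_on, of Su Sv X Y] by auto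
  have on_support: "\<forall>j\<in>Su. \<forall>k\<in>Sv. \<bar>cca_grad X Y B0 $ j $ k\<bar> \<le> \<rho>"
    using cca_restricted_minimizer_subgradient(1)[OF _ supp0 min0] \<rho> by simp
  have off_support: "\<bar>cca_grad X Y B0 $ j $ k\<bar> \<le> \<rho> - R" if "\<not> (j \<in> Su \<and> k \<in> Sv)" for j k
  proof -
    have "\<bar>cca_grad X Y B0 $ j $ k\<bar> \<le> g + R"
      using cca_grad_off_support_bound[OF ne supp supp0 on_support \<sigma> that] unfolding R_def g_def .
    with budget show ?thesis by linarith
  qed
  have "0 \<le> R"
    unfolding R_def g_def using \<rho> \<sigma>
    by (intro mult_nonneg_nonneg divide_nonneg_nonneg add_nonneg_nonneg tau_hat_nonneg max_abs_nonneg) auto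
  define Z where "Z = - (1 / \<rho>) *\<^sub>R cca_grad X Y B0"
  have "\<forall>j k. \<not> (j \<in> Su \<and> k \<in> Sv) \<longrightarrow> \<bar>cca_grad X Y B0 $ j $ k\<bar> \<le> \<rho>"
    using off_support \<open>0 \<le> R\<close> by (meson diff_le_eq le_add_same_cancel1 order_trans)
  then have cert: "cca_certificate X Y \<rho> B0 Z"
    unfolding Z_def by (rule cca_certificate_of_restricted_minimizer[OF \<rho> supp0 min0])
  txt \<open>Off the support, dual feasibility is strict when \<open>tau_hat > 0\<close>; when \<open>tau_hat = 0\<close> it
    need not be, but then the two covariance matrices decouple along the support.\<close>
  have "(\<forall>j k. \<not> (j \<in> Su \<and> k \<in> Sv) \<longrightarrow> \<bar>Z $ j $ k\<bar> < 1)
      \<or> block_diagonal (cov X X) Su \<and> block_diagonal (cov Y Y) Sv"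
  proof (cases "0 < tau_hat X Y Su Sv")
    case True
    have "0 < real (card Su) * real (card Sv)"
      using ne by (simp add: card_gt_0_iff)
    then have "0 < R"
      unfolding R_def g_def using True \<rho> \<sigma>
      by (intro mult_pos_pos divide_pos_pos add_pos_nonneg max_abs_nonneg) auto
    then have "\<bar>Z $ j $ k\<bar> < 1" if "\<not> (j \<in> Su \<and> k \<in> Sv)" for j k
      using off_support[OF that] \<rho> by (simp add: Z_def abs_mult)
    then show ?thesis by blast
  next
    case False
    then show ?thesis
      using tau_hat_nonpos_imp_block_diagonal[OF _ ne \<sigma>] by simp
  qed
  from cca_certificate_unique_minimizer[OF \<rho> \<sigma> supp0 cert this]
  show ?thesis by (rule that[OF supp0])
qed

theorem theorem5:
  fixes X :: "real^'p::finite^'n::finite"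
    and Y :: "real^'q::finite^'n"
    and Bstar :: "real^'q^'p"
    and Su :: "'p set" and Sv :: "'q set"
    and \<rho> :: real
  assumes rho_pos: "\<rho> > 0"
    and Su_ne: "Su \<noteq> {}" and Sv_ne: "Sv \<noteq> {}"
    and supp: "\<forall>i j. Bstar $ i $ j \<noteq> 0 \<longrightarrow> i \<in> Su \<and> j \<in> Sv"
    and n_gt: "CARD('n) > max (card Su) (card Sv)"
    and sX: "sigma_min_sub (cov X X) Su > 0"
    and sY: "sigma_min_sub (cov Y Y) Sv > 0"
    and cond: "let G = cov X Y - cov X X ** Bstar ** cov Y Y in
       max_abs G / \<rho> + 2 * (max_abs G + \<rho>) / \<rho> *
         (tau_hat X Y Su Sv * sqrt (real (card Su) * real (card Sv))
          / (sigma_min_sub (cov X X) Su * sigma_min_sub (cov Y Y) Sv)) \<le> 1"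
  shows "(\<exists>!B. \<forall>B'. cca_obj X Y \<rho> B \<le> cca_obj X Y \<rho> B') \<and>
         (\<forall>B. (\<forall>B'. cca_obj X Y \<rho> B \<le> cca_obj X Y \<rho> B') \<longrightarrow>
              (\<forall>i j. B $ i $ j \<noteq> 0 \<longrightarrow> i \<in> Su \<and> j \<in> Sv))"
proof -
  define g where "g = max_abs (cov X Y - cov X X ** Bstar ** cov Y Y)"
  define R where "R = tau_hat X Y Su Sv * (sqrt (real (card Su) * real (card Sv)) * (\<rho> + g)
      / (sigma_min_sub (cov X X) Su * sigma_min_sub (cov Y Y) Sv))"
  have "(g + 2 * R) / \<rho> \<le> 1"
    using cond rho_pos sX sY by (simp add: Let_def g_def[symmetric] R_def field_simps)
  then have "g + 2 * R \<le> \<rho>"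
    using rho_pos by simp
  moreover have "supported_on Bstar Su Sv"
    using supp by (simp add: supported_on_def)
  ultimately obtain B0 where "supported_on B0 Su Sv"
    and "\<And>B. (\<forall>B'. cca_obj X Y \<rho> B \<le> cca_obj X Y \<rho> B') \<longleftrightarrow> B = B0"
    using cca_primal_dual_witness[OF rho_pos Su_ne Sv_ne _ sX sY] unfolding g_def R_def by blast
  then show ?thesis
    unfolding supported_on_def by auto
qed

end
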